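(* Let $\mathcal H$ be a separable complex Hilbert space, $A\in L(\mathcal H)^+$ and $\mathcal S$ a closed subspace such that $(A,\mathcal S)$ is compatible, and let $\mathcal N=\mathcal S\cap N(A)$. Then $$\Pi(A,\mathcal S)=P_{A,\mathcal S}+L(\mathcal H,\mathcal N)=\{P_{A,\mathcal S}+W:\ W\in L(\mathcal H),\ R(W)\subseteq\mathcal N\}.$$
   Context: $(A,\mathcal S)$ is compatible if there exists $Q\in L(\mathcal H)$ with $Q^2=Q$, $R(Q)=\mathcal S$, $AQ=Q^*A$. In that case $P_{A,\mathcal S}$ denotes the unique (bounded) oblique projection with range $\mathcal S$ and nullspace $A(\mathcal S)^\perp\cap\mathcal N^\perp$; it satisfies $AP_{A,\mathcal S}=P_{A,\mathcal S}^*A$. $\Pi(A,\mathcal S)$ is the set of $A$-projections into $\mathcal S$: operators $T\in L(\mathcal H)$ with $R(T)\subseteq\mathcal S$ and $\|y-Ty\|_A\le\|y-s\|_A$ for all $y\in\mathcal H$, $s\in\mathcal S$, where $\|z\|_A=\langle Az,z\rangle^{1/2}$. *)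

theory Defs
  imports "HOL-Analysis.Analysis"
begin

text \<open>A complex Hilbert space is modelled as a real Hilbert space (type of class
real_inner + complete_space) together with a complex structure J (multiplication
by the imaginary unit): J is real-linear, bounded, J(Jx) = -x and J is orthogonal.\<close>

definition complex_structure :: "('a::real_inner \<Rightarrow> 'a) \<Rightarrow> bool" where
  "complex_structure J \<longleftrightarrow> bounded_linear J \<and> (\<forall>x. J (J x) = - x) \<and> (\<forall>x y. J x \<bullet> J y = x \<bullet> y)"

definition scaleJ :: "('a::real_inner \<Rightarrow> 'a) \<Rightarrow> complex \<Rightarrow> 'a \<Rightarrow> 'a" where
  "scaleJ J c x = Re c *\<^sub>R x + Im c *\<^sub>R J x"

text \<open>Complex inner product, linear in the first argument, conjugate linear in the second.\<close>
definition cinner :: "('a::real_inner \<Rightarrow> 'a) \<Rightarrow> 'a \<Rightarrow> 'a \<Rightarrow> complex" where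
  "cinner J x y = Complex (x \<bullet> y) (- (J x \<bullet> y))"

definition bops :: "('a::real_inner \<Rightarrow> 'a) \<Rightarrow> ('a \<Rightarrow> 'a) set" where
  "bops J = {T. bounded_linear T \<and> (\<forall>x. T (J x) = J (T x))}"

definition pos_ops :: "('a::real_inner \<Rightarrow> 'a) \<Rightarrow> ('a \<Rightarrow> 'a) set" where
  "pos_ops J = {A \<in> bops J. \<forall>x. Im (cinner J (A x) x) = 0 \<and> Re (cinner J (A x) x) \<ge> 0}"

definition closed_csubspace :: "('a::real_inner \<Rightarrow> 'a) \<Rightarrow> 'a set \<Rightarrow> bool" where
  "closed_csubspace J S \<longleftrightarrow> subspace S \<and> (\<forall>x\<in>S. J x \<in> S) \<and> closed S"

definition corth :: "('a::real_inner \<Rightarrow> 'a) \<Rightarrow> 'a set \<Rightarrow> 'a set" where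
  "corth J M = {x. \<forall>y\<in>M. cinner J x y = 0}"

text \<open>Q^* A = A Q, expressed via the defining property of the adjoint:
  <Q^* A x, y> = <A x, Q y>.\<close>
definition A_selfadjoint :: "('a::real_inner \<Rightarrow> 'a) \<Rightarrow> ('a \<Rightarrow> 'a) \<Rightarrow> ('a \<Rightarrow> 'a) \<Rightarrow> bool" where
  "A_selfadjoint J A Q \<longleftrightarrow> (\<forall>x y. cinner J (A (Q x)) y = cinner J (A x) (Q y))"

definition compatible :: "('a::real_inner \<Rightarrow> 'a) \<Rightarrow> ('a \<Rightarrow> 'a) \<Rightarrow> 'a set \<Rightarrow> bool" where
  "compatible J A S \<longleftrightarrow> (\<exists>Q \<in> bops J. Q \<circ> Q = Q \<and> range Q = S \<and> A_selfadjoint J A Q)"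

definition P_AS :: "('a::real_inner \<Rightarrow> 'a) \<Rightarrow> ('a \<Rightarrow> 'a) \<Rightarrow> 'a set \<Rightarrow> ('a \<Rightarrow> 'a)" where
  "P_AS J A S = (THE Q. Q \<in> bops J \<and> Q \<circ> Q = Q \<and> range Q = S \<and>
      {x. Q x = 0} = corth J (A ` S) \<inter> corth J (S \<inter> {x. A x = 0}))"

definition normA :: "('a::real_inner \<Rightarrow> 'a) \<Rightarrow> ('a \<Rightarrow> 'a) \<Rightarrow> 'a \<Rightarrow> real" where
  "normA J A z = sqrt (Re (cinner J (A z) z))"

definition A_projections :: "('a::real_inner \<Rightarrow> 'a) \<Rightarrow> ('a \<Rightarrow> 'a) \<Rightarrow> 'a set \<Rightarrow> ('a \<Rightarrow> 'a) set" where
  "A_projections J A S = {T \<in> bops J. range T \<subseteq> S \<and>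
      (\<forall>y s. s \<in> S \<longrightarrow> normA J A (y - T y) \<le> normA J A (y - s))}"

end

theory Submission
  imports Defs
begin

text \<open>An operator T with range in S is an A-projection iff all residuals y - T y are
  A-orthogonal to S (expand the quadratic form of A along lines in S). So if P is one
  A-projection, T is another iff W = T - P has range in S and A W y is orthogonal to S; testing
  against W y itself gives A W y = 0 by positivity, i.e. W maps into N = S \<inter> N(A).
  It remains to see that P_{A,S} is an A-projection: a compatible projection Q is one, hence so
  is Q + P_N (I - Q) with P_N the orthogonal projection onto N (Hilbert projection theorem), and
  this operator has exactly the range and kernel prescribed for P_{A,S}.\<close>

lemma linear_coeff_eq_0_if_quadratic_nonneg:
  fixes b c :: real
  assumes "\<And>t. 0 \<le> 2*t*b + t^2*c"
  shows "b = 0"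
proof (rule ccontr)
  assume b: "b \<noteq> 0"
  show False
  proof (cases "c \<le> 0")
    case True
    have "0 \<le> 2*(-b)*b + (-b)^2*c" by (rule assms)
    moreover have "(-b)^2*c \<le> 0" using True by (simp add: mult_nonneg_nonpos)
    moreover have "b*b > 0" using b by (auto simp: zero_less_mult_iff linorder_neq_iff)
    ultimately show False by (simp add: power2_eq_square)
  next
    case False
    have "0 \<le> 2*(-b/c)*b + (-b/c)^2*c" by (rule assms)
    also have "\<dots> = - (b*b)/c" using False by (simp add: power2_eq_square field_simps)
    also have "\<dots> < 0" using False b by (auto simp: zero_less_mult_iff linorder_neq_iff)
    finally show False by simp
  qed
qed

definition positive_symmetric :: "('a::real_inner \<Rightarrow> 'a) \<Rightarrow> bool" where
  "positive_symmetric A \<longleftrightarrow> linear A \<and> (\<forall>x y. A x \<bullet> y = x \<bullet> A y) \<and> (\<forall>x. 0 \<le> A x \<bullet> x)"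

lemma positive_symmetric_id: "positive_symmetric id"
  by (simp add: positive_symmetric_def linear_id)

lemma positive_symmetric_expand:
  assumes "positive_symmetric A"
  shows "A (z + t *\<^sub>R u) \<bullet> (z + t *\<^sub>R u) = A z \<bullet> z + 2*t*(A z \<bullet> u) + t^2*(A u \<bullet> u)"
proof -
  have lin: "linear A" and "A u \<bullet> z = u \<bullet> A z"
    using assms by (auto simp: positive_symmetric_def)
  then have "A u \<bullet> z = A z \<bullet> u" by (simp add: inner_commute)
  with lin show ?thesis
    by (simp add: linear_add linear_scale inner_add power2_eq_square algebra_simps)
qed

lemma positive_symmetric_eq_0:
  assumes A: "positive_symmetric A" and x: "A x \<bullet> x = 0"
  shows "A x = 0"
proof -
  have "A x \<bullet> A x = 0"
  proof (rule linear_coeff_eq_0_if_quadratic_nonneg)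
    fix t
    have "0 \<le> A (x + t *\<^sub>R A x) \<bullet> (x + t *\<^sub>R A x)"
      using A unfolding positive_symmetric_def by blast
    then show "0 \<le> 2*t*(A x \<bullet> A x) + t^2*(A (A x) \<bullet> A x)"
      using positive_symmetric_expand[OF A] x by simp
  qed
  then show ?thesis by simp
qed

lemma positive_symmetric_minimizer_iff:
  assumes A: "positive_symmetric A" and S: "subspace S" and t: "t \<in> S"
  shows "(\<forall>s\<in>S. A (y - t) \<bullet> (y - t) \<le> A (y - s) \<bullet> (y - s)) \<longleftrightarrow> (\<forall>u\<in>S. A (y - t) \<bullet> u = 0)"
proof
  assume min: "\<forall>s\<in>S. A (y - t) \<bullet> (y - t) \<le> A (y - s) \<bullet> (y - s)"
  show "\<forall>u\<in>S. A (y - t) \<bullet> u = 0"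
  proof (intro ballI linear_coeff_eq_0_if_quadratic_nonneg)
    fix u r assume u: "u \<in> S"
    have "t - r *\<^sub>R u \<in> S" using S t u by (simp add: subspace_diff subspace_mul)
    moreover have "y - (t - r *\<^sub>R u) = (y - t) + r *\<^sub>R u" by simp
    ultimately have "A (y - t) \<bullet> (y - t) \<le> A ((y - t) + r *\<^sub>R u) \<bullet> ((y - t) + r *\<^sub>R u)"
      using min by metis
    then show "0 \<le> 2*r*(A (y - t) \<bullet> u) + r^2*(A u \<bullet> u)"
      unfolding positive_symmetric_expand[OF A] by simp
  qed
next
  assume orth: "\<forall>u\<in>S. A (y - t) \<bullet> u = 0"
  show "\<forall>s\<in>S. A (y - t) \<bullet> (y - t) \<le> A (y - s) \<bullet> (y - s)"
  proof
    fix s assume "s \<in> S"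
    then have ts: "t - s \<in> S" using S t by (simp add: subspace_diff)
    have "A (y - s) \<bullet> (y - s) = A ((y - t) + 1 *\<^sub>R (t - s)) \<bullet> ((y - t) + 1 *\<^sub>R (t - s))"
      by simp
    also have "\<dots> = A (y - t) \<bullet> (y - t) + A (t - s) \<bullet> (t - s)"
      unfolding positive_symmetric_expand[OF A] using orth ts by simp
    moreover have "0 \<le> A (t - s) \<bullet> (t - s)" using A unfolding positive_symmetric_def by blast
    ultimately show "A (y - t) \<bullet> (y - t) \<le> A (y - s) \<bullet> (y - s)" by simp
  qed
qed

lemma infdist_minimizing_sequence:
  fixes x :: "'a::metric_space"
  assumes "M \<noteq> {}"
  obtains m where "\<And>n. m n \<in> M" "(\<lambda>n. dist x (m n)) \<longlonglongrightarrow> infdist x M"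
proof -
  have "\<exists>a\<in>M. dist x a < infdist x M + inverse (real (Suc n))" for n
  proof -
    have "bdd_below (dist x ` M)" by (rule bdd_belowI2[of _ 0]) simp
    then show ?thesis
      using assms unfolding infdist_notempty[OF assms] by (subst cINF_less_iff[symmetric]) auto
  qed
  then obtain m where m: "\<And>n. m n \<in> M"
    and close: "\<And>n. dist x (m n) < infdist x M + inverse (real (Suc n))"
    by metis
  have "(\<lambda>n. dist x (m n)) \<longlonglongrightarrow> infdist x M"
  proof (rule tendsto_sandwich)
    show "\<forall>\<^sub>F n in sequentially. infdist x M \<le> dist x (m n)" by (simp add: infdist_le m)
    show "\<forall>\<^sub>F n in sequentially. dist x (m n) \<le> infdist x M + inverse (real (Suc n))"
      using close by (simp add: less_imp_le)
    show "(\<lambda>n. infdist x M + inverse (real (Suc n))) \<longlonglongrightarrow> infdist x M"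
      using tendsto_add[OF tendsto_const LIMSEQ_inverse_real_of_nat] by simp
  qed simp
  with m show ?thesis by (rule that)
qed

lemma convex_infdist_parallelogram:
  fixes x :: "'a::real_inner"
  assumes M: "convex M" and a: "a \<in> M" and b: "b \<in> M"
  shows "(dist a b)^2 \<le> 2*(dist x a)^2 + 2*(dist x b)^2 - 4*(infdist x M)^2"
proof -
  have parallelogram: "(norm (a - b))^2 + (norm ((x - a) + (x - b)))^2
      = 2*(norm (x - a))^2 + 2*(norm (x - b))^2"
    by (simp add: power2_norm_eq_inner inner_add inner_diff inner_commute algebra_simps)
  have "(1/2) *\<^sub>R a + (1/2) *\<^sub>R b \<in> M" using convexD[OF M a b] by simp
  then have "infdist x M \<le> dist x ((1/2) *\<^sub>R a + (1/2) *\<^sub>R b)" by (rule infdist_le)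
  also have "\<dots> = norm ((x - a) + (x - b)) / 2"
  proof -
    have "(x - a) + (x - b) = 2 *\<^sub>R (x - ((1/2) *\<^sub>R a + (1/2) *\<^sub>R b))"
      by (simp add: algebra_simps scaleR_2)
    then show ?thesis by (simp add: dist_norm)
  qed
  finally have "(2 * infdist x M)^2 \<le> (norm ((x - a) + (x - b)))^2"
    by (intro power_mono) (auto simp: infdist_nonneg)
  with parallelogram show ?thesis by (simp add: dist_norm norm_minus_commute power_mult_distrib)
qed

lemma convex_minimizing_sequence_Cauchy:
  fixes x :: "'a::real_inner"
  assumes M: "convex M" and m: "\<And>n. m n \<in> M"
    and lim: "(\<lambda>n. dist x (m n)) \<longlonglongrightarrow> infdist x M"
  shows "Cauchy m"
proof (rule metric_CauchyI)
  fix e :: real assume e: "e > 0"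
  define g where "g n = (dist x (m n))^2 - (infdist x M)^2" for n
  have "g \<longlonglongrightarrow> 0"
    unfolding g_def using tendsto_diff[OF tendsto_power[OF lim, of 2] tendsto_const, of "(infdist x M)^2"] by simp
  then have "\<forall>\<^sub>F n in sequentially. g n < e^2/4" using e by (intro order_tendstoD) auto
  then obtain N where N: "\<And>n. N \<le> n \<Longrightarrow> g n < e^2/4" by (auto simp: eventually_sequentially)
  show "\<exists>N. \<forall>p\<ge>N. \<forall>q\<ge>N. dist (m p) (m q) < e"
  proof (intro exI allI impI)
    fix p q assume "N \<le> p" "N \<le> q"
    have "(dist (m p) (m q))^2 \<le> 2 * g p + 2 * g q"
      using convex_infdist_parallelogram[OF M m m, of p q x] by (simp add: g_def)
    also have "\<dots> < e^2" using N[OF \<open>N \<le> p\<close>] N[OF \<open>N \<le> q\<close>] by linarith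
    finally show "dist (m p) (m q) < e" using e by (simp add: power_less_imp_less_base)
  qed
qed

lemma closed_convex_closest_point_exists:
  fixes M :: "'a::{real_inner,complete_space} set"
  assumes "convex M" "closed M" "M \<noteq> {}"
  obtains m where "m \<in> M" "\<And>s. s \<in> M \<Longrightarrow> dist x m \<le> dist x s"
proof -
  obtain m where m: "\<And>n. m n \<in> M" and lim: "(\<lambda>n. dist x (m n)) \<longlonglongrightarrow> infdist x M"
    using infdist_minimizing_sequence[OF assms(3)] by blast
  have "Cauchy m" using convex_minimizing_sequence_Cauchy[OF assms(1) m lim] .
  then obtain m0 where m0: "m \<longlonglongrightarrow> m0" using Cauchy_convergent_iff convergent_def by blast
  have "m0 \<in> M" using closed_sequentially[OF assms(2)] m m0 by blast
  moreover have "dist x m0 = infdist x M"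
    using tendsto_unique[OF trivial_limit_sequentially tendsto_dist[OF tendsto_const m0] lim] .
  ultimately show ?thesis using that infdist_le by metis
qed

lemma closed_subspace_orthogonal_decomposition:
  fixes M :: "'a::{real_inner,complete_space} set"
  assumes M: "subspace M" "closed M"
  shows "\<exists>m\<in>M. \<forall>n\<in>M. (x - m) \<bullet> n = 0"
proof -
  obtain m where m: "m \<in> M" and min: "\<And>s. s \<in> M \<Longrightarrow> dist x m \<le> dist x s"
    using closed_convex_closest_point_exists[of M x] M subspace_imp_convex subspace_0 by blast
  have "\<forall>s\<in>M. id (x - m) \<bullet> (x - m) \<le> id (x - s) \<bullet> (x - s)"
    using min by (simp add: dist_norm dot_square_norm power_mono)
  then show ?thesis
    using m positive_symmetric_minimizer_iff[OF positive_symmetric_id M(1) m] by auto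
qed

definition orth_proj :: "'a::real_inner set \<Rightarrow> 'a \<Rightarrow> 'a" where
  "orth_proj M x = (SOME m. m \<in> M \<and> (\<forall>n\<in>M. (x - m) \<bullet> n = 0))"

context
  fixes M :: "'a::{real_inner,complete_space} set"
  assumes M: "subspace M" "closed M"
begin

lemma orth_proj_in: "orth_proj M x \<in> M"
  and orth_proj_orthogonal: "n \<in> M \<Longrightarrow> (x - orth_proj M x) \<bullet> n = 0"
  using someI_ex[OF closed_subspace_orthogonal_decomposition[OF M, of x, unfolded Bex_def]]
  unfolding orth_proj_def by auto

lemma orth_proj_unique:
  assumes m: "m \<in> M" "\<And>n. n \<in> M \<Longrightarrow> (x - m) \<bullet> n = 0"
  shows "orth_proj M x = m"
proof -
  let ?p = "orth_proj M x"
  have d: "m - ?p \<in> M" using M(1) m(1) orth_proj_in by (simp add: subspace_diff)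
  have "(m - ?p) \<bullet> (m - ?p) = ((x - ?p) - (x - m)) \<bullet> (m - ?p)" by simp
  also have "\<dots> = 0" using m(2)[OF d] orth_proj_orthogonal[OF d] by (simp add: inner_diff_left)
  finally show ?thesis by simp
qed

lemma orth_proj_fixes: "n \<in> M \<Longrightarrow> orth_proj M n = n"
  by (rule orth_proj_unique) simp_all

lemma orth_proj_eq_0: "(\<And>n. n \<in> M \<Longrightarrow> x \<bullet> n = 0) \<Longrightarrow> orth_proj M x = 0"
  by (rule orth_proj_unique) (simp_all add: subspace_0[OF M(1)])

lemma bounded_linear_orth_proj: "bounded_linear (orth_proj M)"
proof (rule bounded_linear_intro[where K=1])
  fix x y :: 'a and r :: real
  show "orth_proj M (x + y) = orth_proj M x + orth_proj M y"
  proof (rule orth_proj_unique)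
    show "orth_proj M x + orth_proj M y \<in> M" using M(1) orth_proj_in by (simp add: subspace_add)
    fix n assume "n \<in> M"
    have "(x + y - (orth_proj M x + orth_proj M y)) \<bullet> n
        = (x - orth_proj M x) \<bullet> n + (y - orth_proj M y) \<bullet> n"
      by (simp add: inner_diff_left inner_add_left)
    then show "(x + y - (orth_proj M x + orth_proj M y)) \<bullet> n = 0"
      using orth_proj_orthogonal[OF \<open>n \<in> M\<close>] by simp
  qed
  show "orth_proj M (r *\<^sub>R x) = r *\<^sub>R orth_proj M x"
  proof (rule orth_proj_unique)
    show "r *\<^sub>R orth_proj M x \<in> M" using M(1) orth_proj_in by (simp add: subspace_mul)
    fix n assume "n \<in> M"
    have "(r *\<^sub>R x - r *\<^sub>R orth_proj M x) \<bullet> n = r * ((x - orth_proj M x) \<bullet> n)"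
      by (simp add: inner_diff_left right_diff_distrib)
    then show "(r *\<^sub>R x - r *\<^sub>R orth_proj M x) \<bullet> n = 0"
      using orth_proj_orthogonal[OF \<open>n \<in> M\<close>] by simp
  qed
  have "orth_proj M x \<bullet> (x - orth_proj M x) = 0"
    using orth_proj_orthogonal[OF orth_proj_in] by (simp add: inner_commute)
  then have "(norm (orth_proj M x + (x - orth_proj M x)))^2
      = (norm (orth_proj M x))^2 + (norm (x - orth_proj M x))^2"
    by (intro norm_add_Pythagorean) (simp add: orthogonal_def)
  then have "(norm (orth_proj M x))^2 \<le> (norm x)^2"
    using zero_le_power2[of "norm (x - orth_proj M x)"] by simp
  then show "norm (orth_proj M x) \<le> norm x * 1"
    using power2_le_imp_le norm_ge_zero by fastforce
qed

end

lemma complex_structure_skew: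
  assumes "complex_structure J"
  shows "J x \<bullet> y = - (x \<bullet> J y)"
proof -
  have JJ: "J (J x) = - x" and orth: "J (J x) \<bullet> J y = J x \<bullet> y"
    using assms unfolding complex_structure_def by blast+
  show ?thesis using orth unfolding JJ by simp
qed

lemma orth_proj_commute_complex_structure:
  fixes M :: "'a::{real_inner,complete_space} set"
  assumes M: "subspace M" "closed M" and J: "complex_structure J" and JM: "\<And>y. y \<in> M \<Longrightarrow> J y \<in> M"
  shows "orth_proj M (J x) = J (orth_proj M x)"
proof (rule orth_proj_unique[OF M])
  interpret J: bounded_linear J using J by (simp add: complex_structure_def)
  show "J (orth_proj M x) \<in> M" using JM orth_proj_in[OF M] by simp
  fix n assume "n \<in> M"
  have "(J x - J (orth_proj M x)) \<bullet> n = - ((x - orth_proj M x) \<bullet> J n)"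
    using complex_structure_skew[OF J] by (simp add: J.diff[symmetric])
  also have "\<dots> = 0" using orth_proj_orthogonal[OF M JM[OF \<open>n \<in> M\<close>]] by simp
  finally show "(J x - J (orth_proj M x)) \<bullet> n = 0" .
qed

lemma cinner_eq_0_iff: "cinner J x y = 0 \<longleftrightarrow> x \<bullet> y = 0 \<and> J x \<bullet> y = 0"
  by (simp add: cinner_def complex_eq_iff)

lemma corth_complex_structure_invariant:
  assumes J: "complex_structure J" and JM: "\<And>y. y \<in> M \<Longrightarrow> J y \<in> M"
  shows "corth J M = {x. \<forall>y\<in>M. x \<bullet> y = 0}"
  using JM complex_structure_skew[OF J] unfolding corth_def cinner_eq_0_iff by fastforce

lemma pos_ops_positive_symmetric:
  assumes J: "complex_structure J" and A: "A \<in> pos_ops J"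
  shows "positive_symmetric A"
proof -
  interpret A: bounded_linear A using A by (simp add: pos_ops_def bops_def)
  interpret J: bounded_linear J using J by (simp add: complex_structure_def)
  have AJ: "A (J x) = J (A x)" for x using A by (simp add: pos_ops_def bops_def)
  have real: "J (A x) \<bullet> x = 0" for x using A by (simp add: pos_ops_def cinner_def)
  have skew: "J (A x) \<bullet> y = - (J (A y) \<bullet> x)" for x y
    using real[of "x + y"] real[of x] real[of y] by (simp add: A.add J.add inner_add)
  have "A x \<bullet> y = x \<bullet> A y" for x y
  proof -
    have "A x \<bullet> y = J (A x) \<bullet> J y" using J by (simp add: complex_structure_def)
    also have "\<dots> = - (J (A (J y)) \<bullet> x)" by (rule skew)
    also have "\<dots> = x \<bullet> A y" using J by (simp add: AJ complex_structure_def inner_commute)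
    finally show ?thesis .
  qed
  moreover have "0 \<le> A x \<bullet> x" for x using A by (simp add: pos_ops_def cinner_def)
  ultimately show ?thesis by (simp add: positive_symmetric_def A.linear)
qed

lemma bops_add:
  assumes "linear J" "T \<in> bops J" "U \<in> bops J"
  shows "(\<lambda>x. T x + U x) \<in> bops J"
  using assms by (auto simp: bops_def linear_add intro: bounded_linear_add)

lemma bops_diff:
  assumes "linear J" "T \<in> bops J" "U \<in> bops J"
  shows "(\<lambda>x. T x - U x) \<in> bops J"
  using assms by (auto simp: bops_def linear_diff intro: bounded_linear_sub)

lemma A_projections_iff:
  assumes J: "complex_structure J" and A: "A \<in> pos_ops J" and S: "subspace S"
  shows "T \<in> A_projections J A S \<longleftrightarrow>
    T \<in> bops J \<and> range T \<subseteq> S \<and> (\<forall>y. \<forall>u\<in>S. A (y - T y) \<bullet> u = 0)"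
proof -
  have "(\<forall>s\<in>S. normA J A (y - T y) \<le> normA J A (y - s)) \<longleftrightarrow> (\<forall>u\<in>S. A (y - T y) \<bullet> u = 0)"
    if "range T \<subseteq> S" for y
    using that positive_symmetric_minimizer_iff[OF pos_ops_positive_symmetric[OF J A] S, of "T y" y]
    by (auto simp: normA_def cinner_def)
  then show ?thesis unfolding A_projections_def by blast
qed

lemma A_projections_eq_translates:
  assumes J: "complex_structure J" and A: "A \<in> pos_ops J" and S: "subspace S"
    and P: "P \<in> A_projections J A S"
  shows "A_projections J A S = {(\<lambda>x. P x + W x) | W. W \<in> bops J \<and> range W \<subseteq> S \<inter> {x. A x = 0}}"
proof -
  have linJ: "linear J" using J by (simp add: complex_structure_def bounded_linear.linear)
  have linA: "linear A" using A by (simp add: pos_ops_def bops_def bounded_linear.linear)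
  note iff = A_projections_iff[OF J A S]
  have Pb: "P \<in> bops J" and PS: "\<And>x. P x \<in> S" and Pres: "\<And>y u. u \<in> S \<Longrightarrow> A (y - P y) \<bullet> u = 0"
    using P unfolding iff by auto
  show ?thesis
  proof (intro set_eqI iffI)
    fix T assume "T \<in> A_projections J A S"
    then have Tb: "T \<in> bops J" and TS: "\<And>x. T x \<in> S" and Tres: "\<And>y u. u \<in> S \<Longrightarrow> A (y - T y) \<bullet> u = 0"
      unfolding iff by auto
    define W where "W x = T x - P x" for x
    have WS: "W x \<in> S" for x unfolding W_def using TS PS S by (simp add: subspace_diff)
    have "A (W x) \<bullet> u = 0" if "u \<in> S" for x u
    proof -
      have "A (W x) = A (x - P x) - A (x - T x)" unfolding W_def by (simp add: linear_diff[OF linA])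
      then show ?thesis using Pres[OF that] Tres[OF that] by (simp add: inner_diff_left)
    qed
    then have "A (W x) = 0" for x
      using positive_symmetric_eq_0[OF pos_ops_positive_symmetric[OF J A]] WS by blast
    moreover have "W \<in> bops J" unfolding W_def[abs_def] by (rule bops_diff[OF linJ Tb Pb])
    moreover have "T = (\<lambda>x. P x + W x)" unfolding W_def by simp
    ultimately show "T \<in> {(\<lambda>x. P x + W x) | W. W \<in> bops J \<and> range W \<subseteq> S \<inter> {x. A x = 0}}"
      using WS by blast
  next
    fix T assume "T \<in> {(\<lambda>x. P x + W x) | W. W \<in> bops J \<and> range W \<subseteq> S \<inter> {x. A x = 0}}"
    then obtain W where T: "T = (\<lambda>x. P x + W x)" and Wb: "W \<in> bops J"
      and WS: "\<And>x. W x \<in> S" and WA: "\<And>x. A (W x) = 0"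
      by blast
    have "A (y - T y) \<bullet> u = 0" if "u \<in> S" for y u
    proof -
      have "A (y - T y) = A (y - P y) - A (W y)" unfolding T by (simp add: linear_diff[OF linA] linear_add[OF linA] algebra_simps)
      then show ?thesis using Pres[OF that] WA by simp
    qed
    moreover have "T \<in> bops J" unfolding T by (rule bops_add[OF linJ Pb Wb])
    moreover have "T x \<in> S" for x unfolding T using PS WS S by (simp add: subspace_add)
    ultimately show "T \<in> A_projections J A S" unfolding iff by blast
  qed
qed

lemma idempotent_eqI:
  assumes "linear Q1" "linear Q2" "Q1 \<circ> Q1 = Q1" "Q2 \<circ> Q2 = Q2"
    and "range Q1 = range Q2" "{x. Q1 x = 0} = {x. Q2 x = 0}"
  shows "Q1 = Q2"
proof
  fix x
  have "Q1 (x - Q1 x) = 0" using assms(3) by (simp add: linear_diff[OF assms(1)] fun_eq_iff)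
  then have "Q2 (x - Q1 x) = 0" using assms(6) by blast
  then have "Q2 x = Q2 (Q1 x)" by (simp add: linear_diff[OF assms(2)])
  moreover obtain z where "Q1 x = Q2 z" using assms(5) by (metis rangeI image_iff)
  ultimately show "Q1 x = Q2 x" using assms(4) by (simp add: fun_eq_iff)
qed

locale compatible_projection =
  fixes J :: "'a::{real_inner,complete_space} \<Rightarrow> 'a" and A :: "'a \<Rightarrow> 'a"
    and S :: "'a set" and Q :: "'a \<Rightarrow> 'a"
  assumes J: "complex_structure J" and A: "A \<in> pos_ops J" and S: "closed_csubspace J S"
    and Q_bops: "Q \<in> bops J" and Q_idem: "Q \<circ> Q = Q" and Q_range: "range Q = S"
    and Q_A_selfadjoint: "A_selfadjoint J A Q"
begin

definition N :: "'a set" where "N = S \<inter> {x. A x = 0}"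

definition P :: "'a \<Rightarrow> 'a" where "P x = Q x + orth_proj N (x - Q x)"

lemma linear_J: "linear J"
  using J by (simp add: complex_structure_def bounded_linear.linear)

lemma bounded_linear_A: "bounded_linear A"
  using A by (simp add: pos_ops_def bops_def)

lemma A_diff: "A (x - y) = A x - A y"
  by (rule linear_diff[OF bounded_linear.linear[OF bounded_linear_A]])

lemma A_symmetric: "A x \<bullet> y = x \<bullet> A y"
  using pos_ops_positive_symmetric[OF J A] by (simp add: positive_symmetric_def)

lemma A_commute: "A (J x) = J (A x)"
  using A by (simp add: pos_ops_def bops_def)

lemma subspace_S: "subspace S" and closed_S: "closed S" and J_S: "x \<in> S \<Longrightarrow> J x \<in> S"
  using S by (auto simp: closed_csubspace_def)

lemma Q_fixes: "s \<in> S \<Longrightarrow> Q s = s"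
  using Q_idem Q_range by (auto simp: fun_eq_iff)

lemma Q_in: "Q x \<in> S"
  using Q_range by auto

lemma Q_residual_A_orthogonal:
  assumes "u \<in> S"
  shows "A (x - Q x) \<bullet> u = 0"
proof -
  have lin: "linear Q" using Q_bops by (simp add: bops_def bounded_linear.linear)
  have "A (x - Q x) \<bullet> u = A (x - Q x) \<bullet> Q u" using Q_fixes[OF assms] by simp
  also have "\<dots> = A (Q (x - Q x)) \<bullet> u"
    using Q_A_selfadjoint unfolding A_selfadjoint_def cinner_def complex_eq_iff by simp
  also have "\<dots> = 0"
    using Q_idem by (simp add: linear_diff[OF lin] linear_0[OF bounded_linear.linear[OF bounded_linear_A]] fun_eq_iff)
  finally show ?thesis .
qed

lemma Q_A_projection: "Q \<in> A_projections J A S"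
  using A_projections_iff[OF J A subspace_S] Q_bops Q_in Q_residual_A_orthogonal by auto

lemma subspace_N: "subspace N" and closed_N: "closed N" and J_N: "x \<in> N \<Longrightarrow> J x \<in> N"
proof -
  have "subspace {x. A x = 0}" using bounded_linear_A
    by (auto simp: subspace_def bounded_linear.linear linear_add linear_scale linear_0)
  then show "subspace N" unfolding N_def using subspace_S by (rule subspace_inter[rotated])
  show "closed N" unfolding N_def
    using bounded_linear_A closed_S
    by (intro closed_Int closed_Collect_eq continuous_intros) (auto intro: linear_continuous_on)
  show "x \<in> N \<Longrightarrow> J x \<in> N"
    using J_S A_commute J by (auto simp: N_def complex_structure_def bounded_linear.linear linear_0)
qed


lemma N_correction_bops: "(\<lambda>x. orth_proj N (x - Q x)) \<in> bops J"
proof -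
  have "bounded_linear Q" using Q_bops by (simp add: bops_def)
  then have "bounded_linear (\<lambda>x. orth_proj N (x - Q x))"
    by (intro bounded_linear_compose[OF bounded_linear_orth_proj[OF subspace_N closed_N]]
        bounded_linear_sub bounded_linear_ident)
  moreover have "orth_proj N (J x - Q (J x)) = J (orth_proj N (x - Q x))" for x
    using Q_bops orth_proj_commute_complex_structure[OF subspace_N closed_N J J_N]
    by (simp add: bops_def linear_diff[OF linear_J, symmetric])
  ultimately show ?thesis by (simp add: bops_def)
qed

lemma P_A_projection: "P \<in> A_projections J A S"
proof -
  have "range (\<lambda>x. orth_proj N (x - Q x)) \<subseteq> S \<inter> {x. A x = 0}"
    using orth_proj_in[OF subspace_N closed_N] by (auto simp: N_def)
  then have "P \<in> {(\<lambda>x. Q x + W x) | W. W \<in> bops J \<and> range W \<subseteq> S \<inter> {x. A x = 0}}"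
    unfolding P_def[abs_def] using N_correction_bops by auto
  then show ?thesis
    using A_projections_eq_translates[OF J A subspace_S Q_A_projection] by simp
qed

lemma P_bops: "P \<in> bops J" and P_in: "P x \<in> S"
  using P_A_projection by (auto simp: A_projections_def)

lemma P_eq_orth_proj:
  assumes "Q x \<in> N"
  shows "P x = orth_proj N x"
proof -
  interpret R: bounded_linear "orth_proj N" by (rule bounded_linear_orth_proj[OF subspace_N closed_N])
  show ?thesis using orth_proj_fixes[OF subspace_N closed_N assms] by (simp add: P_def R.diff)
qed

lemma P_fixes: "s \<in> S \<Longrightarrow> P s = s"
  using orth_proj_fixes[OF subspace_N closed_N subspace_0[OF subspace_N]]
  by (simp add: P_def Q_fixes)

lemma P_idem: "P \<circ> P = P"
  using P_fixes P_in by (simp add: fun_eq_iff)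

lemma P_range: "range P = S"
proof
  show "range P \<subseteq> S" using P_in by auto
  show "S \<subseteq> range P" using P_fixes by (metis rangeI subsetI)
qed

lemma P_kernel: "{x. P x = 0} = corth J (A ` S) \<inter> corth J N"
proof -
  have "corth J (A ` S) = {x. \<forall>y\<in>A ` S. x \<bullet> y = 0}"
    by (rule corth_complex_structure_invariant[OF J]) (auto simp: A_commute[symmetric] J_S)
  moreover have "corth J N = {x. \<forall>y\<in>N. x \<bullet> y = 0}"
    by (rule corth_complex_structure_invariant[OF J J_N])
  moreover have "P x = 0 \<longleftrightarrow> (\<forall>s\<in>S. x \<bullet> A s = 0) \<and> (\<forall>n\<in>N. x \<bullet> n = 0)" for x
  proof
    assume P0: "P x = 0"
    have "Q x = - orth_proj N (x - Q x)" using P0 by (simp add: P_def eq_neg_iff_add_eq_0)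
    moreover have "- orth_proj N (x - Q x) \<in> N"
      using subspace_neg[OF subspace_N orth_proj_in[OF subspace_N closed_N]] .
    ultimately have QN: "Q x \<in> N" by simp
    then have "orth_proj N x = 0" using P0 P_eq_orth_proj by simp
    then have "\<forall>n\<in>N. x \<bullet> n = 0" using orth_proj_orthogonal[OF subspace_N closed_N, of _ x] by simp
    moreover have "x \<bullet> A s = 0" if "s \<in> S" for s
    proof -
      have "x \<bullet> A s = A (Q x) \<bullet> s + A (x - Q x) \<bullet> s"
        by (simp add: A_symmetric[symmetric] A_diff inner_diff_left)
      then show ?thesis using QN Q_residual_A_orthogonal[OF that] by (simp add: N_def)
    qed
    ultimately show "(\<forall>s\<in>S. x \<bullet> A s = 0) \<and> (\<forall>n\<in>N. x \<bullet> n = 0)" by blast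
  next
    assume orth: "(\<forall>s\<in>S. x \<bullet> A s = 0) \<and> (\<forall>n\<in>N. x \<bullet> n = 0)"
    have "A (Q x) \<bullet> Q x = A x \<bullet> Q x - A (x - Q x) \<bullet> Q x"
      by (simp add: A_diff inner_diff_left)
    also have "\<dots> = 0"
      using orth Q_in Q_residual_A_orthogonal[OF Q_in] by (simp add: A_symmetric)
    finally have "A (Q x) = 0" by (rule positive_symmetric_eq_0[OF pos_ops_positive_symmetric[OF J A]])
    then have "Q x \<in> N" using Q_in by (simp add: N_def)
    then show "P x = 0"
      using P_eq_orth_proj orth_proj_eq_0[OF subspace_N closed_N] orth by simp
  qed
  ultimately show ?thesis by (simp add: set_eq_iff)
qed

lemma P_AS_eq: "P_AS J A S = P"
  unfolding P_AS_def N_def[symmetric]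
proof (rule the_equality)
  show "P \<in> bops J \<and> P \<circ> P = P \<and> range P = S \<and> {x. P x = 0} = corth J (A ` S) \<inter> corth J N"
    by (intro conjI P_bops P_idem P_range P_kernel)
  fix P' assume "P' \<in> bops J \<and> P' \<circ> P' = P' \<and> range P' = S \<and>
      {x. P' x = 0} = corth J (A ` S) \<inter> corth J N"
  then have "P' \<in> bops J" and idem: "P' \<circ> P' = P'" and range: "range P' = range P"
    and kernel: "{x. P' x = 0} = {x. P x = 0}"
    using P_range P_kernel by simp_all
  then have "linear P'" "linear P" using P_bops by (simp_all add: bops_def bounded_linear.linear)
  then show "P' = P" using idem P_idem range kernel by (rule idempotent_eqI)
qed

end

theorem mainTheorem8:
  fixes J :: "'a::{real_inner, complete_space} \<Rightarrow> 'a"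
    and A :: "'a \<Rightarrow> 'a" and S :: "'a set"
  assumes "complex_structure J"
    and "separable_space (euclidean :: 'a topology)"
    and "A \<in> pos_ops J"
    and "closed_csubspace J S"
    and "compatible J A S"
  shows "A_projections J A S =
           {(\<lambda>x. P_AS J A S x + W x) | W. W \<in> bops J \<and> range W \<subseteq> S \<inter> {x. A x = 0}}"
proof -
  obtain Q where "Q \<in> bops J" "Q \<circ> Q = Q" "range Q = S" "A_selfadjoint J A Q"
    using assms(5) unfolding compatible_def by blast
  with assms(1,3,4) interpret compatible_projection J A S Q
    by (simp add: compatible_projection_def)
  show ?thesis
    unfolding P_AS_eq by (rule A_projections_eq_translates[OF J A subspace_S P_A_projection])
qed

end
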